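(* Let $E$ be a finite set and let $S$ be a powerful multiset over $E$ with indicator function $f:2^E\to\mathbb{Z}_{\ge0}$ (with $f(\emptyset)\neq 0$). Then for every $X\subseteq E$, $f(\emptyset)$ divides $f(X)$.
   Context: A multiset over $E$ is a collection of subsets of $E$ with repetition; its indicator function $f$ assigns to each $X\subseteq E$ its multiplicity. Assuming $f(\emptyset)\neq 0$, its rank function is $r_S(X)=\log_2\Big(\sum_{Y\subseteq E} f(Y)\big/\sum_{Y\subseteq E\setminus X} f(Y)\Big)$, and $S$ is a powerful multiset if $r_S(X)$ is an integer for every $X\subseteq E$. *)

theory Defs
  imports Complex_Main
begin

text \<open>A multiset S of subsets of a finite ground set E is represented by its indicator
  function f (multiplicity of each subset Y of E).  Only subsets of E are summed over.\<close>

definition ms_rank :: "'a set \<Rightarrow> ('a set \<Rightarrow> nat) \<Rightarrow> 'a set \<Rightarrow> real" where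
  "ms_rank E f X =
     log 2 (real (\<Sum>Y\<in>Pow E. f Y) / real (\<Sum>Y\<in>Pow (E - X). f Y))"

definition powerful :: "'a set \<Rightarrow> ('a set \<Rightarrow> nat) \<Rightarrow> bool" where
  "powerful E f \<longleftrightarrow> (\<forall>X. X \<subseteq> E \<longrightarrow> ms_rank E f X \<in> \<int>)"

end

theory Submission
  imports Defs
begin

text \<open>Write \<open>g A = (\<Sum>Y\<in>Pow A. f Y)\<close>. Integrality of the rank of \<open>E - A\<close> says that
  \<open>g E / g A\<close> is a power of two for every \<open>A \<subseteq> E\<close>; comparing \<open>A\<close> with \<open>{}\<close> shows that
  \<open>g A = f {} * 2^j\<close> for some \<open>j\<close>, so \<open>f {}\<close> divides every \<open>g A\<close>. Since \<open>f A\<close> is \<open>g A\<close>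
  minus the values of \<open>f\<close> on proper subsets of \<open>A\<close>, divisibility passes from \<open>g\<close> to \<open>f\<close>
  by induction on \<open>A\<close>.\<close>

lemma nat_eq_mult_power_if_log_Ints:
  fixes a b c :: nat
  assumes "1 < c" and "0 < b" and "b \<le> a" and "log c (a / b) \<in> \<int>"
  shows "\<exists>k. a = b * c ^ k"
proof -
  obtain z where z: "log c (a / b) = of_int z"
    using assms(4) by (auto elim: Ints_cases)
  have "0 \<le> log c (a / b)"
    using assms(1-3) by simp
  then have "z \<ge> 0"
    using z by simp
  have "real a / real b = c powr log c (a / b)"
    using assms(1-3) by simp
  also have "\<dots> = c ^ nat z"
    using z \<open>z \<ge> 0\<close> assms(1) by (simp add: powr_realpow [symmetric])
  finally have "real a = real (b * c ^ nat z)"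
    using assms(2) by (simp add: field_simps)
  then show ?thesis
    by (blast dest: of_nat_eq_iff [THEN iffD1])
qed

lemma sum_Pow_eq_add_sum_psubsets:
  assumes "finite A"
  shows "sum f (Pow A) = f A + (\<Sum>Y | Y \<subset> A. f Y)"
proof -
  have "Pow A = insert A {Y. Y \<subset> A}"
    by blast
  moreover have "finite {Y. Y \<subset> A}"
    by (rule finite_subset [of _ "Pow A"]) (use assms in auto)
  ultimately show ?thesis
    by simp
qed

lemma dvd_if_dvd_sum_Pow:
  fixes f :: "'a set \<Rightarrow> 'b::comm_semiring_1_cancel"
  assumes "finite E"
    and dvd_sum_Pow: "\<And>A. A \<subseteq> E \<Longrightarrow> d dvd sum f (Pow A)"
    and "X \<subseteq> E"
  shows "d dvd f X"
  using finite_subset [OF \<open>X \<subseteq> E\<close> \<open>finite E\<close>] \<open>X \<subseteq> E\<close>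
proof (induction X rule: finite_psubset_induct)
  case (psubset A)
  have "d dvd (\<Sum>Y | Y \<subset> A. f Y)"
    by (rule dvd_sum) (use psubset.IH psubset.prems in blast)
  moreover have "d dvd f A + (\<Sum>Y | Y \<subset> A. f Y)"
    using dvd_sum_Pow [OF psubset.prems] sum_Pow_eq_add_sum_psubsets [OF psubset.hyps, of f]
    by simp
  ultimately show ?case
    by (simp add: dvd_add_left_iff)
qed

lemma powerful_sum_Pow_eq_mult_power:
  assumes "finite E" and "f {} \<noteq> 0" and "powerful E f" and "A \<subseteq> E"
  shows "\<exists>k. (\<Sum>Y\<in>Pow E. f Y) = (\<Sum>Y\<in>Pow A. f Y) * 2 ^ k"
proof -
  have "finite A"
    using assms(1,4) by (rule finite_subset [rotated])
  then have "f {} \<le> (\<Sum>Y\<in>Pow A. f Y)"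
    by (intro member_le_sum) auto
  then have "0 < (\<Sum>Y\<in>Pow A. f Y)"
    using assms(2) by linarith
  moreover have "(\<Sum>Y\<in>Pow A. f Y) \<le> (\<Sum>Y\<in>Pow E. f Y)"
    using assms(1,4) by (intro sum_mono2) auto
  moreover have "E - (E - A) = A"
    using assms(4) by blast
  then have "log (real 2) ((\<Sum>Y\<in>Pow E. f Y) / (\<Sum>Y\<in>Pow A. f Y)) \<in> \<int>"
    using assms(3) unfolding powerful_def ms_rank_def
    by (metis Diff_subset of_nat_numeral)
  ultimately show ?thesis
    by (intro nat_eq_mult_power_if_log_Ints) auto
qed

lemma powerful_dvd_sum_Pow:
  assumes "finite E" and "f {} \<noteq> 0" and "powerful E f" and "A \<subseteq> E"
  shows "f {} dvd (\<Sum>Y\<in>Pow A. f Y)"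
proof -
  obtain k where k: "(\<Sum>Y\<in>Pow E. f Y) = (\<Sum>Y\<in>Pow A. f Y) * 2 ^ k"
    using powerful_sum_Pow_eq_mult_power [OF assms] by blast
  obtain m where m: "(\<Sum>Y\<in>Pow E. f Y) = f {} * 2 ^ m"
    using powerful_sum_Pow_eq_mult_power [OF assms(1-3), of "{}"] by auto
  have "f {} \<le> (\<Sum>Y\<in>Pow A. f Y)"
    using finite_subset [OF assms(4,1)] by (intro member_le_sum) auto
  then have "f {} * 2 ^ k \<le> f {} * 2 ^ m"
    using k m by (metis mult_le_mono1)
  then have "k \<le> m"
    using assms(2) by simp
  then have "(2::nat) ^ m = 2 ^ (m - k) * 2 ^ k"
    by (simp flip: power_add)
  then have "(\<Sum>Y\<in>Pow A. f Y) * 2 ^ k = f {} * 2 ^ (m - k) * 2 ^ k"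
    using k m by (simp only: mult.assoc)
  then show ?thesis
    by simp
qed

theorem theorem5:
  fixes E :: "'a set" and f :: "'a set \<Rightarrow> nat"
  assumes "finite E"
    and "f {} \<noteq> 0"
    and "powerful E f"
    and "X \<subseteq> E"
  shows "f {} dvd f X"
  using assms(1) powerful_dvd_sum_Pow [OF assms(1-3)] assms(4)
  by (rule dvd_if_dvd_sum_Pow)

end
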